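(* Let $\mathcal{C}$ be a finite or countable alphabet with letter probabilities $(p_\alpha)_{\alpha\in\mathcal{C}}$, $0<p_\alpha<1$, $\sum_\alpha p_\alpha=1$, and let $\mathbb{P}$ be the product measure with these identically distributed marginals. Let $n$ be a positive integer and $k$ a positive integer with $k\le\lfloor n/2\rfloor-1$. Then $\mathbb{P}\Big(\bigcup_{j=k}^{\lfloor n/2\rfloor-1}R_n(j)\Big)=\mathbb{P}\Big(\bigcup_{j=k}^{\lfloor n/2\rfloor-1}R_{2(\lfloor n/2\rfloor-1)}(j)\Big)$.
   Context: $\mathbb{P}(x_1^m)=\prod_{i=1}^m p_{x_i}$ on $\mathcal{C}^m$; $x_a^b=(x_a,\dots,x_b)$. For $1\le j\le m-1$, $R_m(j)=\{x_1^m\in\mathcal{C}^m: x_1^j=x_{m-j+1}^m\}$. *)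

theory Defs
  imports "HOL-Analysis.Analysis"
begin

text \<open>Words of length m over the alphabet (the type 'a) are lists of length m;
  position i (1-based in the paper) is xs ! (i-1).\<close>

definition words :: "nat \<Rightarrow> 'a list set" where
  "words m = {xs. length xs = m}"

definition wprob :: "('a \<Rightarrow> real) \<Rightarrow> nat \<Rightarrow> 'a list set \<Rightarrow> real" where
  "wprob p m A = (\<Sum>\<^sub>\<infinity> xs \<in> A \<inter> words m. \<Prod>i<m. p (xs ! i))"

definition R :: "nat \<Rightarrow> nat \<Rightarrow> 'a list set" where
  "R m j = {xs \<in> words m. take j xs = drop (m - j) xs}"

end

theory Submission
  imports Defs
begin

text \<open>A union of events \<open>R m j\<close> with \<open>j \<le> h\<close> only constrains the first and the last \<open>h\<close>
  letters of a word. The \<open>m - 2 h\<close> letters in between are unconstrained and independent,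
  and each of them contributes total mass \<open>\<Sum>\<^sub>a p a = 1\<close>; removing them one at a time
  therefore leaves the probability unchanged, down to words of length \<open>2 h\<close>.\<close>

definition insert_nth :: "nat \<Rightarrow> 'a \<Rightarrow> 'a list \<Rightarrow> 'a list" where
  "insert_nth h a xs = take h xs @ a # drop h xs"

lemma prod_list_map_insert_nth:
  fixes p :: "'a \<Rightarrow> 'b::comm_monoid_mult"
  shows "prod_list (map p (insert_nth h a xs)) = p a * prod_list (map p xs)"
proof -
  have "prod_list (map p (insert_nth h a xs))
      = p a * (prod_list (map p (take h xs)) * prod_list (map p (drop h xs)))"
    by (simp add: insert_nth_def ac_simps)
  also have "\<dots> = p a * prod_list (map p xs)"
    by (simp flip: prod_list.append map_append)
  finally show ?thesis .
qed

lemma has_sum_product_nonneg: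
  fixes f :: "'a \<Rightarrow> real" and g :: "'b \<Rightarrow> real"
  assumes "\<And>x. x \<in> A \<Longrightarrow> 0 \<le> f x" and "\<And>y. y \<in> B \<Longrightarrow> 0 \<le> g y"
    and f: "(f has_sum a) A" and g: "(g has_sum b) B"
  shows "((\<lambda>(x, y). f x * g y) has_sum a * b) (A \<times> B)"
proof -
  have rows: "((\<lambda>y. f x * g y) has_sum f x * b) B" for x
    using has_sum_cmult_right[OF g] .
  have cols: "((\<lambda>x. f x * b) has_sum a * b) A"
    using has_sum_cmult_left[OF f] .
  have "(\<lambda>(x, y). f x * g y) summable_on A \<times> B"
    using rows cols assms(1,2)
    by (intro summable_on_SigmaI[where g = "\<lambda>x. f x * b"]) (auto simp: summable_on_def)
  with rows cols show ?thesis
    by (intro has_sum_SigmaI[where g = "\<lambda>x. f x * b"]) auto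
qed

lemma has_sum_prod_list_insert_nth:
  fixes p :: "'a \<Rightarrow> real"
  assumes p_nonneg: "\<And>a. 0 \<le> p a" and p_sum: "(p has_sum 1) UNIV"
    and S_sum: "((\<lambda>xs. prod_list (map p xs)) has_sum c) S"
    and S_long: "\<And>xs. xs \<in> S \<Longrightarrow> h \<le> length xs"
  shows "((\<lambda>xs. prod_list (map p xs)) has_sum c) ((\<lambda>(xs, a). insert_nth h a xs) ` (S \<times> UNIV))"
proof -
  let ?ins = "\<lambda>(xs, a). insert_nth h a xs"
  have "inj_on ?ins (S \<times> UNIV)"
    by (rule inj_on_inverseI[where g = "\<lambda>ys. (take h ys @ drop (Suc h) ys, ys ! h)"])
       (auto simp: insert_nth_def nth_append min_def S_long)
  moreover have "((\<lambda>(xs, a). prod_list (map p xs) * p a) has_sum c * 1) (S \<times> UNIV)"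
    using p_nonneg by (intro has_sum_product_nonneg S_sum p_sum prod_list_nonneg) auto
  moreover have "(\<lambda>xs. prod_list (map p xs)) \<circ> ?ins = (\<lambda>(xs, a). prod_list (map p xs) * p a)"
    by (auto simp: prod_list_map_insert_nth mult.commute)
  ultimately show ?thesis
    by (simp add: has_sum_reindex)
qed

definition prefix_suffix_event ::
    "nat \<Rightarrow> ('a list \<Rightarrow> 'a list \<Rightarrow> bool) \<Rightarrow> nat \<Rightarrow> 'a list set" where
  "prefix_suffix_event h Q r = {xs. length xs = 2 * h + r \<and> Q (take h xs) (drop (h + r) xs)}"

lemma prefix_suffix_event_Suc:
  "prefix_suffix_event h Q (Suc r)
     = (\<lambda>(xs, a). insert_nth h a xs) ` (prefix_suffix_event h Q r \<times> UNIV)"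
proof
  show "(\<lambda>(xs, a). insert_nth h a xs) ` (prefix_suffix_event h Q r \<times> UNIV)
      \<subseteq> prefix_suffix_event h Q (Suc r)"
  proof
    fix ys assume "ys \<in> (\<lambda>(xs, a). insert_nth h a xs) ` (prefix_suffix_event h Q r \<times> UNIV)"
    then obtain xs a where xs: "xs \<in> prefix_suffix_event h Q r" and ys: "ys = insert_nth h a xs"
      by auto
    then have len: "length xs = 2 * h + r"
      by (simp add: prefix_suffix_event_def)
    have "length ys = 2 * h + Suc r" and "take h ys = take h xs"
      using len by (simp_all add: ys insert_nth_def)
    moreover have "drop (h + Suc r) ys = drop (h + r) xs"
      using len by (simp add: ys insert_nth_def add.commute)
    ultimately show "ys \<in> prefix_suffix_event h Q (Suc r)"
      using xs by (simp add: prefix_suffix_event_def)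
  qed
  show "prefix_suffix_event h Q (Suc r)
      \<subseteq> (\<lambda>(xs, a). insert_nth h a xs) ` (prefix_suffix_event h Q r \<times> UNIV)"
  proof
    fix ys assume ys: "ys \<in> prefix_suffix_event h Q (Suc r)"
    define xs where "xs = take h ys @ drop (Suc h) ys"
    have "xs \<in> prefix_suffix_event h Q r"
      using ys by (auto simp: prefix_suffix_event_def xs_def add.commute)
    moreover have "ys = insert_nth h (ys ! h) xs"
      using ys by (simp add: prefix_suffix_event_def xs_def insert_nth_def id_take_nth_drop)
    ultimately show "ys \<in> (\<lambda>(xs, a). insert_nth h a xs) ` (prefix_suffix_event h Q r \<times> UNIV)"
      by (auto intro: rev_image_eqI[of "(xs, ys ! h)"])
  qed
qed

lemma has_sum_prefix_suffix_event:
  fixes p :: "'a \<Rightarrow> real"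
  assumes "\<And>a. 0 \<le> p a" and "(p has_sum 1) UNIV"
    and "((\<lambda>xs. prod_list (map p xs)) has_sum c) (prefix_suffix_event h Q 0)"
  shows "((\<lambda>xs. prod_list (map p xs)) has_sum c) (prefix_suffix_event h Q r)"
proof (induction r)
  case (Suc r)
  then show ?case
    unfolding prefix_suffix_event_Suc
    by (intro has_sum_prod_list_insert_nth assms) (auto simp: prefix_suffix_event_def)
qed (use assms in simp)

lemma has_sum_prod_list_words:
  fixes p :: "'a \<Rightarrow> real"
  assumes "\<And>a. 0 \<le> p a" and "(p has_sum 1) UNIV"
  shows "((\<lambda>xs. prod_list (map p xs)) has_sum 1) (words m)"
proof -
  have "prefix_suffix_event 0 (\<lambda>_ _. True) 0 = {[] :: 'a list}"
    by (auto simp: prefix_suffix_event_def)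
  moreover have "((\<lambda>xs. prod_list (map p xs)) has_sum 1) {[]}"
    using has_sum_finite[of "{[]}" "\<lambda>xs. prod_list (map p xs)"] by simp
  ultimately have "((\<lambda>xs. prod_list (map p xs)) has_sum 1) (prefix_suffix_event 0 (\<lambda>_ _. True) 0)"
    by (simp only:)
  then have "((\<lambda>xs. prod_list (map p xs)) has_sum 1) (prefix_suffix_event 0 (\<lambda>_ _. True) m)"
    by (rule has_sum_prefix_suffix_event[OF assms])
  moreover have "prefix_suffix_event 0 (\<lambda>_ _. True) m = (words m :: 'a list set)"
    by (simp add: words_def prefix_suffix_event_def)
  ultimately show ?thesis
    by simp
qed

lemma wprob_eq_infsum_prod_list:
  "wprob p m A = (\<Sum>\<^sub>\<infinity>xs \<in> A \<inter> words m. prod_list (map p xs))"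
  unfolding wprob_def
  by (rule infsum_cong) (auto simp: words_def prod.list_conv_set_nth atLeast0LessThan)

lemma Union_R_inter_words:
  assumes "J \<subseteq> {..h}" and "2 * h \<le> m"
  shows "(\<Union>j\<in>J. R m j) \<inter> words m
       = prefix_suffix_event h (\<lambda>u v. \<exists>j\<in>J. take j u = drop (h - j) v) (m - 2 * h)"
proof -
  have "take j xs = drop (m - j) xs \<longleftrightarrow> take j (take h xs) = drop (h - j) (drop (h + (m - 2 * h)) xs)"
    if "length xs = m" and "j \<in> J" for xs :: "'a list" and j
  proof -
    have "j \<le> h" using that assms(1) by auto
    then show ?thesis
      using that assms(2) by (simp add: min_def add.commute)
  qed
  then show ?thesis
    using assms(2) by (auto simp: R_def words_def prefix_suffix_event_def)
qed

theorem lemma3: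
  fixes p :: "'a::countable \<Rightarrow> real" and n k :: nat
  assumes "\<And>a. 0 < p a \<and> p a < 1"
    and "(p has_sum 1) UNIV"
    and "0 < n" and "0 < k" and "k \<le> n div 2 - 1"
  shows "wprob p n (\<Union>j\<in>{k..n div 2 - 1}. R n j)
       = wprob p (2 * (n div 2 - 1)) (\<Union>j\<in>{k..n div 2 - 1}. R (2 * (n div 2 - 1)) j)"
proof -
  define h where "h = n div 2 - 1"
  define Q where "Q = (\<lambda>u v :: 'a list. \<exists>j\<in>{k..h}. take j u = drop (h - j) v)"
  let ?w = "\<lambda>xs. prod_list (map p xs)"
  have p_nonneg: "\<And>a. 0 \<le> p a"
    using assms(1) less_imp_le by blast
  have "2 * h \<le> n"
    unfolding h_def by linarith
  then have long: "(\<Union>j\<in>{k..h}. R n j) \<inter> words n = prefix_suffix_event h Q (n - 2 * h)"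
    unfolding Q_def by (intro Union_R_inter_words) auto
  have short: "(\<Union>j\<in>{k..h}. R (2 * h) j) \<inter> words (2 * h) = prefix_suffix_event h Q 0"
    unfolding Q_def using Union_R_inter_words[of "{k..h}" h "2 * h"] by auto
  have "?w summable_on prefix_suffix_event h Q 0"
    using has_sum_prod_list_words[OF p_nonneg assms(2)]
    by (rule summable_on_subset[OF has_sum_imp_summable])
       (auto simp: prefix_suffix_event_def words_def)
  then have "(?w has_sum infsum ?w (prefix_suffix_event h Q 0)) (prefix_suffix_event h Q (n - 2 * h))"
    by (rule has_sum_prefix_suffix_event[OF p_nonneg assms(2) has_sum_infsum])
  then show ?thesis
    unfolding h_def[symmetric] wprob_eq_infsum_prod_list long short by (rule infsumI)
qed

end
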